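(* Let $n\geqslant 3$. Any eigenfunction of the Star graph $S_n$ with eigenvalue $n-2$ can be uniquely reconstructed from its values on the second neighbourhood of any vertex: if $f,g$ are eigenfunctions of $S_n$ with eigenvalue $n-2$, $v$ is a vertex of $S_n$, and $f(x)=g(x)$ for every vertex $x$ at distance exactly $2$ from $v$, then $f=g$.
   Context: Write a permutation $\pi$ of $\{1,\ldots,n\}$ as the sequence $[\pi_1\ldots\pi_n]$. The Star graph $S_n$ has vertex set $\mathrm{Sym}_n$, and two permutations are adjacent iff one is obtained from the other by exchanging the entries in positions $1$ and $i$ for some $2\le i\le n$ (the Cayley graph of $\mathrm{Sym}_n$ generated by the transpositions $(1\ i)$, $2\le i\le n$). A function $f:\mathrm{Sym}_n\to\mathbb{R}$ is an eigenfunction with eigenvalue $\theta$ if $f\not\equiv 0$ and $\theta f(x)=\sum_{y\in N(x)}f(y)$ for every vertex $x$, where $N(x)$ is the neighbourhood of $x$. The second neighbourhood of a vertex $v$ is the set of vertices at distance exactly $2$ from $v$. *)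

theory Defs
  imports "HOL-Combinatorics.Combinatorics"
begin

text \<open>A permutation pi of {1..n} is represented as a function nat => nat with
  pi permutes {1..n}; the sequence [pi_1 ... pi_n] is (pi 1, ..., pi n).\<close>

definition star_vertices :: "nat \<Rightarrow> (nat \<Rightarrow> nat) set" where
  "star_vertices n = {p. p permutes {1..n}}"

text \<open>Exchanging the entries in positions 1 and i: the new sequence is
  p o (1 i).\<close>
definition star_adj :: "nat \<Rightarrow> (nat \<Rightarrow> nat) \<Rightarrow> (nat \<Rightarrow> nat) \<Rightarrow> bool" where
  "star_adj n p q \<longleftrightarrow> p \<in> star_vertices n \<and> q \<in> star_vertices n \<and>
     (\<exists>i\<in>{2..n}. q = p \<circ> Transposition.transpose 1 i)"

definition star_nbhd :: "nat \<Rightarrow> (nat \<Rightarrow> nat) \<Rightarrow> (nat \<Rightarrow> nat) set" where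
  "star_nbhd n p = {q. star_adj n p q}"

definition star_eigenfunction ::
  "nat \<Rightarrow> ((nat \<Rightarrow> nat) \<Rightarrow> real) \<Rightarrow> real \<Rightarrow> bool" where
  "star_eigenfunction n f \<theta> \<longleftrightarrow>
     (\<exists>x\<in>star_vertices n. f x \<noteq> 0) \<and>
     (\<forall>x\<in>star_vertices n. \<theta> * f x = (\<Sum>y\<in>star_nbhd n x. f y))"

inductive star_walk :: "nat \<Rightarrow> (nat \<Rightarrow> nat) \<Rightarrow> nat \<Rightarrow> (nat \<Rightarrow> nat) \<Rightarrow> bool" where
  "p \<in> star_vertices n \<Longrightarrow> star_walk n p 0 p"
| "star_walk n p k q \<Longrightarrow> star_adj n q r \<Longrightarrow> star_walk n p (Suc k) r"

definition star_dist :: "nat \<Rightarrow> (nat \<Rightarrow> nat) \<Rightarrow> (nat \<Rightarrow> nat) \<Rightarrow> nat" where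
  "star_dist n p q = (LEAST k. star_walk n p k q)"

definition second_nbhd :: "nat \<Rightarrow> (nat \<Rightarrow> nat) \<Rightarrow> (nat \<Rightarrow> nat) set" where
  "second_nbhd n v = {x \<in> star_vertices n. star_dist n v x = 2}"

end

theory Submission
  imports Defs
begin

text \<open>
  Let \<open>A\<close> be the adjacency operator of \<open>S\<^sub>n\<close> and, for \<open>p \<ge> 2\<close>, let \<open>J\<^sub>p\<close> be the adjacency
  operator of the Star graph on the positions \<open>2..n\<close> centred at \<open>p\<close>; \<open>J\<^sub>p\<close> commutes with \<open>A\<close>
  and its eigenvalues are at most \<open>n - 2\<close>. Every eigenfunction \<open>u\<close> of \<open>A\<close> for \<open>n - 2\<close> is a
  position sum \<open>x \<mapsto> \<Sum>\<^sub>p \<phi>\<^sub>p(x\<^sub>p)\<close> over \<open>p \<ge> 2\<close>: the transform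
  \<open>W\<^sub>p u = (J\<^sub>p u - (n-2) u) \<circ> (1 p) + u\<close> lies in the top eigenspace of \<open>J\<^sub>p\<close>, hence depends on
  \<open>x\<^sub>1\<close> only, and this determines \<open>\<phi>\<^sub>p\<close>; the remainder \<open>b\<close> has \<open>W\<^sub>p b = 0\<close>, which makes it
  invariant under every \<open>(1 p)\<close>, so \<open>b = 0\<close>.

  Now let \<open>h = f - g\<close> vanish on the second neighbourhood of \<open>v\<close>. The eigenvalue equations at
  \<open>v\<close> and its neighbours give \<open>(n-2)\<^sup>2 h(v) = (n-1) h(v)\<close>, so \<open>h\<close> also vanishes on the closed
  ball of radius \<open>1\<close> about \<open>v\<close>. Comparing the position sum at \<open>v\<close>, \<open>v(1 i)\<close> and \<open>v(1 i)(1 j)\<close>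
  shows that every \<open>\<phi>\<^sub>p\<close> is constant, so \<open>h\<close> is constant, and \<open>h(v) = 0\<close>.
\<close>

abbreviation \<tau> :: "nat \<Rightarrow> nat \<Rightarrow> nat \<Rightarrow> nat" where
  "\<tau> \<equiv> Transposition.transpose"

lemma star_vertices_comp_transpose:
  assumes "x \<in> star_vertices n" "i \<in> {1..n}" "j \<in> {1..n}"
  shows "x \<circ> \<tau> i j \<in> star_vertices n"
  using assms unfolding star_vertices_def
  by (auto intro!: permutes_compose permutes_swap_id)

lemma finite_star_vertices: "finite (star_vertices n)"
  unfolding star_vertices_def by (rule finite_permutations) simp

lemma star_vertices_nonempty: "star_vertices n \<noteq> {}"
  unfolding star_vertices_def using permutes_id by blast

lemma star_vertices_apply: "x \<in> star_vertices n \<Longrightarrow> i \<in> {1..n} \<Longrightarrow> x i \<in> {1..n}"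
  using permutes_in_image[of x "{1..n}" i] unfolding star_vertices_def by blast

lemma star_vertices_inj: "x \<in> star_vertices n \<Longrightarrow> x i = x j \<Longrightarrow> i = j"
  using permutes_inj[of x "{1..n}"] unfolding star_vertices_def inj_def by blast

lemma sum_star_vertices_comp_transpose:
  assumes "i \<in> {1..n}" "j \<in> {1..n}"
  shows "(\<Sum>x\<in>star_vertices n. F (x \<circ> \<tau> i j)) = (\<Sum>x\<in>star_vertices n. F x)"
proof -
  have "bij_betw (\<lambda>x. x \<circ> \<tau> i j) (star_vertices n) (star_vertices n)"
    by (rule bij_betw_byWitness[where f'="\<lambda>x. x \<circ> \<tau> i j"])
       (auto simp: comp_assoc intro: star_vertices_comp_transpose[OF _ assms])
  then show ?thesis by (rule sum.reindex_bij_betw)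
qed

definition transp_sum ::
  "nat \<Rightarrow> nat set \<Rightarrow> ((nat \<Rightarrow> nat) \<Rightarrow> real) \<Rightarrow> (nat \<Rightarrow> nat) \<Rightarrow> real" where
  "transp_sum c K g x = (\<Sum>k\<in>K. g (x \<circ> \<tau> c k))"

abbreviation adj_op :: "nat \<Rightarrow> ((nat \<Rightarrow> nat) \<Rightarrow> real) \<Rightarrow> (nat \<Rightarrow> nat) \<Rightarrow> real" where
  "adj_op n \<equiv> transp_sum 1 {2..n}"

abbreviation inner_star_op ::
  "nat \<Rightarrow> nat \<Rightarrow> ((nat \<Rightarrow> nat) \<Rightarrow> real) \<Rightarrow> (nat \<Rightarrow> nat) \<Rightarrow> real" where
  "inner_star_op n p \<equiv> transp_sum p ({2..n} - {p})"

lemma transp_sum_diff: "transp_sum c K (\<lambda>y. a y - b y) x = transp_sum c K a x - transp_sum c K b x"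
  unfolding transp_sum_def by (simp add: sum_subtractf)

lemma transp_sum_add: "transp_sum c K (\<lambda>y. a y + b y) x = transp_sum c K a x + transp_sum c K b x"
  unfolding transp_sum_def by (simp add: sum.distrib)

lemma transp_sum_cmult: "transp_sum c K (\<lambda>y. r * a y) x = r * transp_sum c K a x"
  unfolding transp_sum_def by (simp add: sum_distrib_left)

lemma card_inner_star: "p \<in> {2..n} \<Longrightarrow> real (card ({2..n} - {p})) = real n - 2"
  by (simp add: card_Diff_singleton of_nat_diff)

lemma star_nbhd_eq:
  assumes "x \<in> star_vertices n"
  shows "star_nbhd n x = (\<lambda>k. x \<circ> \<tau> 1 k) ` {2..n}"
proof -
  have "\<forall>i\<in>{2..n}. x \<circ> \<tau> 1 i \<in> star_vertices n"
    by (intro ballI star_vertices_comp_transpose[OF assms]) auto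
  then show ?thesis using assms unfolding star_nbhd_def star_adj_def by blast
qed

lemma sum_star_nbhd:
  assumes "x \<in> star_vertices n"
  shows "(\<Sum>y\<in>star_nbhd n x. f y) = adj_op n f x"
proof -
  have "inj_on (\<lambda>k. x \<circ> \<tau> 1 k) {2..n}"
  proof
    fix a b assume "x \<circ> \<tau> 1 a = x \<circ> \<tau> 1 b"
    then have "x (\<tau> 1 a 1) = x (\<tau> 1 b 1)" by (metis comp_apply)
    then show "a = b" using star_vertices_inj[OF assms] by simp
  qed
  then show ?thesis unfolding star_nbhd_eq[OF assms] transp_sum_def by (simp add: sum.reindex)
qed

definition star_eigenspace :: "nat \<Rightarrow> real \<Rightarrow> ((nat \<Rightarrow> nat) \<Rightarrow> real) \<Rightarrow> bool" where
  "star_eigenspace n \<theta> g \<longleftrightarrow> (\<forall>x\<in>star_vertices n. adj_op n g x = \<theta> * g x)"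

lemma star_eigenfunction_eigenspace:
  "star_eigenfunction n f \<theta> \<Longrightarrow> star_eigenspace n \<theta> f"
  using sum_star_nbhd unfolding star_eigenspace_def star_eigenfunction_def by auto

lemma star_eigenspace_diff:
  "star_eigenspace n \<theta> a \<Longrightarrow> star_eigenspace n \<theta> b \<Longrightarrow> star_eigenspace n \<theta> (\<lambda>x. a x - b x)"
  unfolding star_eigenspace_def transp_sum_diff by (simp add: right_diff_distrib)

lemma star_eigenspace_cmult:
  "star_eigenspace n \<theta> a \<Longrightarrow> star_eigenspace n \<theta> (\<lambda>x. r * a x)"
  unfolding star_eigenspace_def transp_sum_cmult by simp

lemma sum_star_eigenspace_zero:
  assumes g: "star_eigenspace n \<theta> g" and \<theta>: "\<theta> \<noteq> real n - 1" and n: "n \<ge> 1"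
  shows "(\<Sum>x\<in>star_vertices n. g x) = 0"
proof -
  have "(\<Sum>x\<in>star_vertices n. adj_op n g x) = (\<Sum>k\<in>{2..n}. \<Sum>x\<in>star_vertices n. g (x \<circ> \<tau> 1 k))"
    unfolding transp_sum_def by (rule sum.swap)
  also have "\<dots> = (\<Sum>k\<in>{2..n}. \<Sum>x\<in>star_vertices n. g x)"
    by (rule sum.cong) (auto intro: sum_star_vertices_comp_transpose)
  also have "\<dots> = (real n - 1) * (\<Sum>x\<in>star_vertices n. g x)"
    using n by (simp add: of_nat_diff)
  finally have "(real n - 1) * (\<Sum>x\<in>star_vertices n. g x) = \<theta> * (\<Sum>x\<in>star_vertices n. g x)"
    using g unfolding star_eigenspace_def by (simp add: sum_distrib_left)
  with \<theta> show ?thesis by simp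
qed

lemma star_eigenspace_zero_of_transpose_invariant:
  assumes g: "star_eigenspace n \<theta> g" and \<theta>: "\<theta> \<noteq> real n - 1" and n: "n \<ge> 1"
    and inv: "\<forall>x\<in>star_vertices n. \<forall>k\<in>{2..n}. g (x \<circ> \<tau> 1 k) = g x"
    and x: "x \<in> star_vertices n"
  shows "g x = 0"
proof -
  have "adj_op n g x = (real n - 1) * g x"
    using inv x n unfolding transp_sum_def by (simp add: of_nat_diff)
  with g x \<theta> show ?thesis unfolding star_eigenspace_def by simp
qed

lemma transp_sum_dirichlet:
  assumes c: "c \<in> {1..n}" and K: "K \<subseteq> {1..n}"
  shows "(\<Sum>k\<in>K. \<Sum>x\<in>star_vertices n. (d x - d (x \<circ> \<tau> c k))\<^sup>2)
       = 2 * (real (card K) * (\<Sum>x\<in>star_vertices n. (d x)\<^sup>2)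
              - (\<Sum>x\<in>star_vertices n. d x * transp_sum c K d x))"
proof -
  let ?V = "star_vertices n" and ?Q = "\<Sum>x\<in>star_vertices n. (d x)\<^sup>2"
  have "(\<Sum>x\<in>?V. (d x - d (x \<circ> \<tau> c k))\<^sup>2) = 2 * ?Q - 2 * (\<Sum>x\<in>?V. d x * d (x \<circ> \<tau> c k))"
    if "k \<in> K" for k
  proof -
    have "(\<Sum>x\<in>?V. (d (x \<circ> \<tau> c k))\<^sup>2) = ?Q"
      using sum_star_vertices_comp_transpose[of c n k "\<lambda>x. (d x)\<^sup>2"] c K that by auto
    then show ?thesis
      by (simp add: power2_diff sum.distrib sum_subtractf sum_distrib_left mult.assoc)
  qed
  then have "(\<Sum>k\<in>K. \<Sum>x\<in>?V. (d x - d (x \<circ> \<tau> c k))\<^sup>2)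
      = (\<Sum>k\<in>K. 2 * ?Q - 2 * (\<Sum>x\<in>?V. d x * d (x \<circ> \<tau> c k)))"
    by (rule sum.cong[OF refl])
  also have "\<dots> = 2 * (real (card K) * ?Q - (\<Sum>x\<in>?V. d x * transp_sum c K d x))"
    unfolding transp_sum_def
    by (simp add: sum_subtractf sum_distrib_left sum.swap[of _ ?V] right_diff_distrib mult_ac)
  finally show ?thesis .
qed

lemma transp_sum_eigen_above_card_zero:
  assumes c: "c \<in> {1..n}" and K: "K \<subseteq> {1..n}" and \<mu>: "\<mu> > real (card K)"
    and eig: "\<forall>x\<in>star_vertices n. transp_sum c K d x = \<mu> * d x"
  shows "\<forall>x\<in>star_vertices n. d x = 0"
proof -
  let ?Q = "\<Sum>x\<in>star_vertices n. (d x)\<^sup>2"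
  have "(\<Sum>x\<in>star_vertices n. d x * transp_sum c K d x) = \<mu> * ?Q"
    using eig by (simp add: sum_distrib_left power2_eq_square mult_ac)
  moreover have "(\<Sum>k\<in>K. \<Sum>x\<in>star_vertices n. (d x - d (x \<circ> \<tau> c k))\<^sup>2) \<ge> 0"
    by (intro sum_nonneg) simp
  ultimately have "(\<mu> - real (card K)) * ?Q \<le> 0"
    using transp_sum_dirichlet[OF c K, of d] by (simp add: algebra_simps)
  with \<mu> have "?Q \<le> 0" by (simp add: mult_le_0_iff)
  then have "?Q = 0" by (meson antisym sum_nonneg zero_le_power2)
  then show ?thesis by (simp add: finite_star_vertices sum_nonneg_eq_0_iff)
qed

lemma transp_sum_eigen_card_invariant:
  assumes c: "c \<in> {1..n}" and K: "K \<subseteq> {1..n}"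
    and eig: "\<forall>x\<in>star_vertices n. transp_sum c K w x = real (card K) * w x"
  shows "\<forall>x\<in>star_vertices n. \<forall>k\<in>K. w (x \<circ> \<tau> c k) = w x"
proof (intro ballI)
  fix x k assume x: "x \<in> star_vertices n" and k: "k \<in> K"
  have "finite K" using K finite_subset by blast
  have "(\<Sum>x\<in>star_vertices n. w x * transp_sum c K w x)
      = real (card K) * (\<Sum>x\<in>star_vertices n. (w x)\<^sup>2)"
    using eig by (simp add: sum_distrib_left power2_eq_square mult_ac)
  then have "(\<Sum>k\<in>K. \<Sum>x\<in>star_vertices n. (w x - w (x \<circ> \<tau> c k))\<^sup>2) = 0"
    using transp_sum_dirichlet[OF c K, of w] by simp
  then have "(\<Sum>x\<in>star_vertices n. (w x - w (x \<circ> \<tau> c k))\<^sup>2) = 0"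
    using \<open>finite K\<close> k by (simp add: sum_nonneg sum_nonneg_eq_0_iff)
  then have "(w x - w (x \<circ> \<tau> c k))\<^sup>2 = 0"
    using x by (simp add: finite_star_vertices sum_nonneg_eq_0_iff)
  then show "w (x \<circ> \<tau> c k) = w x" by simp
qed

lemma adj_op_inner_star_op_commute:
  assumes p: "p \<in> {2..n}"
  shows "adj_op n (inner_star_op n p g) x = inner_star_op n p (adj_op n g) x"
proof -
  have "adj_op n (inner_star_op n p g) x
      = (\<Sum>k\<in>{2..n}-{p}. \<Sum>m\<in>{2..n}. g (x \<circ> \<tau> 1 m \<circ> \<tau> p k))"
    unfolding transp_sum_def by (rule sum.swap)
  also have "\<dots> = (\<Sum>k\<in>{2..n}-{p}. \<Sum>m\<in>{2..n}. g (x \<circ> \<tau> p k \<circ> \<tau> 1 m))"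
  proof (rule sum.cong[OF refl])
    fix k assume k: "k \<in> {2..n}-{p}"
    have "\<tau> 1 m \<circ> \<tau> p k = \<tau> p k \<circ> \<tau> 1 (\<tau> p k m)" for m
      using p k by (auto simp: fun_eq_iff transpose_def)
    then have "(\<Sum>m\<in>{2..n}. g (x \<circ> \<tau> 1 m \<circ> \<tau> p k))
        = (\<Sum>m\<in>{2..n}. g (x \<circ> \<tau> p k \<circ> \<tau> 1 (\<tau> p k m)))"
      by (simp add: comp_assoc)
    also have "\<dots> = (\<Sum>m\<in>{2..n}. g (x \<circ> \<tau> p k \<circ> \<tau> 1 m))"
      using p k by (intro sum.reindex_bij_betw permutes_imp_bij permutes_swap_id) auto
    finally show "(\<Sum>m\<in>{2..n}. g (x \<circ> \<tau> 1 m \<circ> \<tau> p k))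
        = (\<Sum>m\<in>{2..n}. g (x \<circ> \<tau> p k \<circ> \<tau> 1 m))" .
  qed
  also have "\<dots> = inner_star_op n p (adj_op n g) x"
    unfolding transp_sum_def ..
  finally show ?thesis .
qed

lemma star_eigenspace_inner_star_op:
  assumes g: "star_eigenspace n \<theta> g" and p: "p \<in> {2..n}"
  shows "star_eigenspace n \<theta> (inner_star_op n p g)"
  unfolding star_eigenspace_def
proof
  fix x assume x: "x \<in> star_vertices n"
  have eig: "adj_op n g (x \<circ> \<tau> p k) = \<theta> * g (x \<circ> \<tau> p k)" if "k \<in> {2..n}-{p}" for k
    using g p that star_vertices_comp_transpose[OF x, of p k] unfolding star_eigenspace_def by auto
  have "adj_op n (inner_star_op n p g) x = inner_star_op n p (adj_op n g) x"
    by (rule adj_op_inner_star_op_commute[OF p])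
  also have "\<dots> = \<theta> * inner_star_op n p g x"
    using eig unfolding transp_sum_def[of p] by (simp add: sum_distrib_left)
  finally show "adj_op n (inner_star_op n p g) x = \<theta> * inner_star_op n p g x" .
qed

lemma inner_star_op_comp_transpose:
  assumes g: "star_eigenspace n \<theta> g" and x: "x \<in> star_vertices n" and p: "p \<in> {2..n}"
  shows "inner_star_op n p (\<lambda>y. g (y \<circ> \<tau> 1 p)) x = \<theta> * g (x \<circ> \<tau> 1 p) - g x"
proof -
  have "\<tau> 1 p \<circ> \<tau> 1 k = \<tau> p k \<circ> \<tau> 1 p" if "k \<in> {2..n}-{p}" for k
    using p that by (auto simp: fun_eq_iff transpose_def)
  then have "adj_op n g (x \<circ> \<tau> 1 p)
      = g x + inner_star_op n p (\<lambda>y. g (y \<circ> \<tau> 1 p)) x"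
    using p unfolding transp_sum_def by (simp add: sum.remove comp_assoc)
  moreover have "adj_op n g (x \<circ> \<tau> 1 p) = \<theta> * g (x \<circ> \<tau> 1 p)"
    using g p star_vertices_comp_transpose[OF x, of 1 p] unfolding star_eigenspace_def by auto
  ultimately show ?thesis by simp
qed

definition W_transform ::
  "nat \<Rightarrow> real \<Rightarrow> nat \<Rightarrow> ((nat \<Rightarrow> nat) \<Rightarrow> real) \<Rightarrow> (nat \<Rightarrow> nat) \<Rightarrow> real" where
  "W_transform n \<theta> p g x = inner_star_op n p g (x \<circ> \<tau> 1 p) - \<theta> * g (x \<circ> \<tau> 1 p) + g x"

lemma W_transform_diff:
  "W_transform n \<theta> p (\<lambda>y. a y - b y) x = W_transform n \<theta> p a x - W_transform n \<theta> p b x"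
  unfolding W_transform_def transp_sum_diff by (simp add: algebra_simps)

lemma inner_star_op_W_transform:
  assumes g: "star_eigenspace n \<theta> g" and p: "p \<in> {2..n}" and x: "x \<in> star_vertices n"
  shows "inner_star_op n p (W_transform n \<theta> p g) x = \<theta> * W_transform n \<theta> p g x"
proof -
  define G where "G = (\<lambda>y. inner_star_op n p g y - \<theta> * g y)"
  have "star_eigenspace n \<theta> G"
    unfolding G_def by (intro star_eigenspace_diff star_eigenspace_cmult star_eigenspace_inner_star_op g p)
  then have "inner_star_op n p (\<lambda>y. G (y \<circ> \<tau> 1 p)) x = \<theta> * G (x \<circ> \<tau> 1 p) - G x"
    using x p by (rule inner_star_op_comp_transpose)
  moreover have "W_transform n \<theta> p g = (\<lambda>y. G (y \<circ> \<tau> 1 p) + g y)"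
    unfolding W_transform_def G_def by (rule ext) simp
  then have "inner_star_op n p (W_transform n \<theta> p g) x
      = inner_star_op n p (\<lambda>y. G (y \<circ> \<tau> 1 p)) x + inner_star_op n p g x"
    by (simp only: transp_sum_add)
  ultimately show ?thesis
    unfolding W_transform_def G_def by (simp add: algebra_simps)
qed

lemma sum_W_transform_pivots:
  assumes g: "star_eigenspace n \<theta> g" and x: "x \<in> star_vertices n"
  shows "(\<Sum>p\<in>{2..n}. W_transform n \<theta> p g x) = 0"
proof -
  have "W_transform n \<theta> p g x
      = (\<Sum>k\<in>{2..n}. g (x \<circ> \<tau> 1 k \<circ> \<tau> 1 p)) - \<theta> * g (x \<circ> \<tau> 1 p)"
    if p: "p \<in> {2..n}" for p
  proof -
    have "\<tau> 1 p \<circ> \<tau> p k = \<tau> 1 k \<circ> \<tau> 1 p" if "k \<in> {2..n}-{p}" for k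
      using p that by (auto simp: fun_eq_iff transpose_def)
    then have "inner_star_op n p g (x \<circ> \<tau> 1 p) = (\<Sum>k\<in>{2..n}-{p}. g (x \<circ> \<tau> 1 k \<circ> \<tau> 1 p))"
      unfolding transp_sum_def by (intro sum.cong) (simp_all add: comp_assoc)
    also have "\<dots> = (\<Sum>k\<in>{2..n}. g (x \<circ> \<tau> 1 k \<circ> \<tau> 1 p)) - g x"
      using p by (simp add: sum_diff1 comp_assoc)
    finally show ?thesis unfolding W_transform_def by simp
  qed
  then have "(\<Sum>p\<in>{2..n}. W_transform n \<theta> p g x)
      = (\<Sum>p\<in>{2..n}. \<Sum>k\<in>{2..n}. g (x \<circ> \<tau> 1 k \<circ> \<tau> 1 p)) - \<theta> * adj_op n g x"
    unfolding transp_sum_def[of 1 "{2..n}" g x] by (simp add: sum_subtractf sum_distrib_left)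
  also have "(\<Sum>p\<in>{2..n}. \<Sum>k\<in>{2..n}. g (x \<circ> \<tau> 1 k \<circ> \<tau> 1 p))
      = (\<Sum>k\<in>{2..n}. adj_op n g (x \<circ> \<tau> 1 k))"
    unfolding transp_sum_def by (rule sum.swap)
  also have "\<dots> = \<theta> * adj_op n g x"
    using g star_vertices_comp_transpose[OF x]
    unfolding star_eigenspace_def transp_sum_def[of 1 "{2..n}" g x]
    by (simp add: sum_distrib_left)
  finally show ?thesis by simp
qed

lemma sum_W_transform:
  assumes p: "p \<in> {2..n}"
  shows "(\<Sum>x\<in>star_vertices n. W_transform n \<theta> p b x)
       = (real n - 1 - \<theta>) * (\<Sum>x\<in>star_vertices n. b x)"
proof -
  have p1: "1 \<in> {1..n}" "p \<in> {1..n}" using p by auto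
  have "(\<Sum>x\<in>star_vertices n. inner_star_op n p b (x \<circ> \<tau> 1 p))
      = (\<Sum>x\<in>star_vertices n. inner_star_op n p b x)"
    by (rule sum_star_vertices_comp_transpose[OF p1])
  also have "\<dots> = (\<Sum>k\<in>{2..n}-{p}. \<Sum>x\<in>star_vertices n. b (x \<circ> \<tau> p k))"
    unfolding transp_sum_def by (rule sum.swap)
  also have "\<dots> = (\<Sum>k\<in>{2..n}-{p}. \<Sum>x\<in>star_vertices n. b x)"
    by (rule sum.cong[OF refl], rule sum_star_vertices_comp_transpose) (use p in auto)
  also have "\<dots> = (real n - 2) * (\<Sum>x\<in>star_vertices n. b x)"
    using card_inner_star[OF p] by simp
  finally have "(\<Sum>x\<in>star_vertices n. inner_star_op n p b (x \<circ> \<tau> 1 p))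
      = (real n - 2) * (\<Sum>x\<in>star_vertices n. b x)" .
  moreover have "(\<Sum>x\<in>star_vertices n. b (x \<circ> \<tau> 1 p)) = (\<Sum>x\<in>star_vertices n. b x)"
    by (rule sum_star_vertices_comp_transpose[OF p1])
  ultimately show ?thesis
    unfolding W_transform_def
    by (simp only: sum.distrib sum_subtractf sum_distrib_left[symmetric]) (simp add: algebra_simps)
qed

lemma transpose_invariant_of_star_invariant:
  assumes A: "A \<subseteq> {1..n}" and p: "p \<in> A"
    and inv: "\<forall>x\<in>star_vertices n. \<forall>k\<in>A-{p}. F (x \<circ> \<tau> p k) = F x"
    and z: "z \<in> star_vertices n" and a: "a \<in> A" and b: "b \<in> A"
  shows "F (z \<circ> \<tau> a b) = F z"
proof -
  have inv': "F (x \<circ> \<tau> k p) = F x" if "x \<in> star_vertices n" "k \<in> A-{p}" for x k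
    using inv that by (simp add: transpose_commute)
  consider "a = b" | "a \<noteq> b" "a = p" | "a \<noteq> b" "b = p" | "a \<noteq> b" "a \<noteq> p" "b \<noteq> p"
    by blast
  then show ?thesis
  proof cases
    case 4
    have za: "z \<circ> \<tau> p a \<in> star_vertices n"
      using A a p by (intro star_vertices_comp_transpose[OF z]) auto
    have zab: "z \<circ> \<tau> p a \<circ> \<tau> p b \<in> star_vertices n"
      using A b p by (intro star_vertices_comp_transpose[OF za]) auto
    have "\<tau> a p \<circ> \<tau> p b \<circ> \<tau> a p = \<tau> a b"
      using 4 by (intro transpose_comp_triple) auto
    then have "F (z \<circ> \<tau> a b) = F (z \<circ> \<tau> p a \<circ> \<tau> p b \<circ> \<tau> p a)"
      by (simp add: comp_assoc transpose_commute)
    also have "\<dots> = F z"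
      using inv z za zab a b 4 by auto
    finally show ?thesis .
  qed (use inv inv' z a b in auto)
qed

lemma permutes_invariant_of_transpose_invariant:
  assumes A: "A \<subseteq> {1..n}" and \<sigma>: "\<sigma> permutes A"
    and inv: "\<forall>z\<in>star_vertices n. \<forall>a\<in>A. \<forall>b\<in>A. F (z \<circ> \<tau> a b) = F z"
  shows "\<forall>z\<in>star_vertices n. F (z \<circ> \<sigma>) = F z"
  using \<sigma> finite_subset[OF A finite_atLeastAtMost]
proof (induction rule: permutes_induct)
  case id
  then show ?case by simp
next
  case (swap a b q)
  show ?case
  proof
    fix z assume z: "z \<in> star_vertices n"
    have za: "z \<circ> \<tau> a b \<in> star_vertices n"
      using swap A by (intro star_vertices_comp_transpose[OF z]) auto
    have "F (z \<circ> (\<tau> a b \<circ> q)) = F (z \<circ> \<tau> a b \<circ> q)"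
      by (simp only: comp_assoc)
    also have "\<dots> = F (z \<circ> \<tau> a b)"
      using swap.IH za by blast
    also have "\<dots> = F z" using inv z swap by blast
    finally show "F (z \<circ> (\<tau> a b \<circ> q)) = F z" .
  qed
qed

lemma eq_of_same_first_of_transpose_invariant:
  assumes inv: "\<forall>z\<in>star_vertices n. \<forall>a\<in>{2..n}. \<forall>b\<in>{2..n}. F (z \<circ> \<tau> a b) = F z"
    and x: "x \<in> star_vertices n" and y: "y \<in> star_vertices n" and xy: "x 1 = y 1"
  shows "F x = F y"
proof -
  have xp: "x permutes {1..n}" and yp: "y permutes {1..n}"
    using x y unfolding star_vertices_def by auto
  define \<sigma> where "\<sigma> = inv x \<circ> y"
  have \<sigma>: "\<sigma> permutes {1..n}" unfolding \<sigma>_def by (intro permutes_compose permutes_inv xp yp)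
  have "\<sigma> 1 = 1" unfolding \<sigma>_def using xy permutes_inverses(2)[OF xp, of 1] by simp
  have "\<sigma> permutes {2..n}"
  proof (rule permutes_superset[OF \<sigma>])
    fix z assume "z \<in> {1..n} - {2..n}"
    then have "z = 1" by auto
    with \<open>\<sigma> 1 = 1\<close> show "\<sigma> z = z" by simp
  qed
  then have "\<forall>z\<in>star_vertices n. F (z \<circ> \<sigma>) = F z"
    by (intro permutes_invariant_of_transpose_invariant[OF _ _ inv]) auto
  then have "F (x \<circ> \<sigma>) = F x" using x by blast
  moreover have "x \<circ> \<sigma> = y"
    unfolding \<sigma>_def using permutes_inv_o(1)[OF xp] by (metis comp_assoc id_comp)
  ultimately show ?thesis by simp
qed

lemma W_transform_depends_on_first:
  assumes g: "star_eigenspace n (real n - 2) g" and p: "p \<in> {2..n}" and x: "x \<in> star_vertices n"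
  shows "W_transform n (real n - 2) p g x = W_transform n (real n - 2) p g (\<tau> 1 (x 1))"
proof (rule eq_of_same_first_of_transpose_invariant[OF _ x])
  have "\<forall>z\<in>star_vertices n. \<forall>k\<in>{2..n}-{p}.
      W_transform n (real n - 2) p g (z \<circ> \<tau> p k) = W_transform n (real n - 2) p g z"
    using p inner_star_op_W_transform[OF g p] card_inner_star[OF p]
    by (intro transp_sum_eigen_card_invariant) auto
  then show "\<forall>z\<in>star_vertices n. \<forall>a\<in>{2..n}. \<forall>b\<in>{2..n}.
      W_transform n (real n - 2) p g (z \<circ> \<tau> a b) = W_transform n (real n - 2) p g z"
    using p transpose_invariant_of_star_invariant[of "{2..n}" n p "W_transform n (real n - 2) p g"]
    by simp
  show "\<tau> 1 (x 1) \<in> star_vertices n"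
    using star_vertices_apply[OF x, of 1] p unfolding star_vertices_def
    by (auto intro: permutes_swap_id)
qed simp

lemma W_transform_zero_imp_invariant:
  assumes b: "star_eigenspace n (real n - 2) b" and p: "p \<in> {2..n}"
    and W: "\<forall>x\<in>star_vertices n. W_transform n (real n - 2) p b x = 0"
  shows "\<forall>x\<in>star_vertices n. b (x \<circ> \<tau> 1 p) = b x"
proof -
  define d where "d = (\<lambda>y. b y - b (y \<circ> \<tau> 1 p))"
  have "inner_star_op n p d z = (real n - 1) * d z" if z: "z \<in> star_vertices n" for z
  proof -
    have "W_transform n (real n - 2) p b (z \<circ> \<tau> 1 p) = 0"
      using W p star_vertices_comp_transpose[OF z, of 1 p] by auto
    then have "inner_star_op n p b z - (real n - 2) * b z + b (z \<circ> \<tau> 1 p) = 0"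
      unfolding W_transform_def by (simp add: comp_assoc)
    moreover have "inner_star_op n p (\<lambda>y. b (y \<circ> \<tau> 1 p)) z = (real n - 2) * b (z \<circ> \<tau> 1 p) - b z"
      by (rule inner_star_op_comp_transpose[OF b z p])
    ultimately show ?thesis
      unfolding d_def transp_sum_diff by (simp add: algebra_simps)
  qed
  then have "\<forall>x\<in>star_vertices n. d x = 0"
    using p card_inner_star[OF p] by (intro transp_sum_eigen_above_card_zero[of p n "{2..n}-{p}" "real n - 1"]) auto
  then show ?thesis unfolding d_def by simp
qed

definition position_sum :: "nat \<Rightarrow> (nat \<Rightarrow> nat \<Rightarrow> real) \<Rightarrow> (nat \<Rightarrow> nat) \<Rightarrow> real" where
  "position_sum n \<phi> x = (\<Sum>p\<in>{2..n}. \<phi> p (x p))"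

lemma position_sum_comp_transpose_first:
  assumes i: "i \<in> {2..n}"
  shows "position_sum n \<phi> (z \<circ> \<tau> 1 i) = position_sum n \<phi> z - \<phi> i (z i) + \<phi> i (z 1)"
proof -
  have "(\<Sum>p\<in>{2..n}-{i}. \<phi> p ((z \<circ> \<tau> 1 i) p)) = (\<Sum>p\<in>{2..n}-{i}. \<phi> p (z p))"
    by (rule sum.cong[OF refl]) auto
  moreover have "position_sum n \<phi> w = \<phi> i (w i) + (\<Sum>p\<in>{2..n}-{i}. \<phi> p (w p))" for w
    unfolding position_sum_def using i by (simp add: sum.remove)
  ultimately show ?thesis by simp
qed

lemma position_sum_comp_transpose:
  assumes i: "i \<in> {2..n}" and j: "j \<in> {2..n}" and ij: "i \<noteq> j"
  shows "position_sum n \<phi> (z \<circ> \<tau> i j)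
       = position_sum n \<phi> z - \<phi> i (z i) - \<phi> j (z j) + \<phi> i (z j) + \<phi> j (z i)"
proof -
  have j': "j \<in> {2..n}-{i}" using j ij by auto
  have "(\<Sum>p\<in>{2..n}-{i}-{j}. \<phi> p ((z \<circ> \<tau> i j) p)) = (\<Sum>p\<in>{2..n}-{i}-{j}. \<phi> p (z p))"
    by (rule sum.cong[OF refl]) auto
  moreover have "position_sum n \<phi> w
      = \<phi> i (w i) + \<phi> j (w j) + (\<Sum>p\<in>{2..n}-{i}-{j}. \<phi> p (w p))" for w
    unfolding position_sum_def using i j' by (simp add: sum.remove[of _ i] sum.remove[of _ j] add.assoc)
  ultimately show ?thesis using ij by simp
qed

lemma position_sum_eigenspace:
  assumes col: "\<forall>a\<in>{1..n}. (\<Sum>p\<in>{2..n}. \<phi> p a) = 0" and n: "n \<ge> 2"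
  shows "star_eigenspace n (real n - 2) (position_sum n \<phi>)"
  unfolding star_eigenspace_def
proof
  fix x assume x: "x \<in> star_vertices n"
  have "adj_op n (position_sum n \<phi>) x
      = (\<Sum>k\<in>{2..n}. position_sum n \<phi> x - \<phi> k (x k) + \<phi> k (x 1))"
    unfolding transp_sum_def by (intro sum.cong refl position_sum_comp_transpose_first)
  also have "\<dots> = (real n - 1) * position_sum n \<phi> x - position_sum n \<phi> x + (\<Sum>k\<in>{2..n}. \<phi> k (x 1))"
    using n by (simp add: sum.distrib sum_subtractf position_sum_def of_nat_diff)
  also have "(\<Sum>k\<in>{2..n}. \<phi> k (x 1)) = 0"
    using col star_vertices_apply[OF x, of 1] n by auto
  finally show "adj_op n (position_sum n \<phi>) x = (real n - 2) * position_sum n \<phi> x"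
    by (simp add: algebra_simps)
qed

lemma W_transform_position_sum:
  assumes col: "\<forall>a\<in>{1..n}. (\<Sum>q\<in>{2..n}. \<phi> q a) = 0"
    and p: "p \<in> {2..n}" and x: "x \<in> star_vertices n"
  shows "W_transform n (real n - 2) p (position_sum n \<phi>) x
       = (\<Sum>a\<in>{1..n}. \<phi> p a) - real n * \<phi> p (x 1)"
proof -
  define y where "y = x \<circ> \<tau> 1 p"
  define K where "K = {2..n}-{p}"
  have yk: "y k = x k" if "k \<in> K" for k using that p unfolding y_def K_def by auto
  have "inner_star_op n p (position_sum n \<phi>) y
      = (\<Sum>k\<in>K. position_sum n \<phi> y - \<phi> p (x 1) - \<phi> k (x k) + \<phi> p (x k) + \<phi> k (x 1))"
    unfolding transp_sum_def K_def[symmetric]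
  proof (rule sum.cong[OF refl])
    fix k assume k: "k \<in> K"
    then have "k \<in> {2..n}" "p \<noteq> k" unfolding K_def by auto
    then show "position_sum n \<phi> (y \<circ> \<tau> p k)
        = position_sum n \<phi> y - \<phi> p (x 1) - \<phi> k (x k) + \<phi> p (x k) + \<phi> k (x 1)"
      using position_sum_comp_transpose[OF p] yk[OF k] by (simp add: y_def)
  qed
  also have "\<dots> = real (card K) * (position_sum n \<phi> y - \<phi> p (x 1))
      - (\<Sum>k\<in>K. \<phi> k (x k)) + (\<Sum>k\<in>K. \<phi> p (x k)) + (\<Sum>k\<in>K. \<phi> k (x 1))"
    by (simp add: sum.distrib sum_subtractf right_diff_distrib)
  finally have J: "inner_star_op n p (position_sum n \<phi>) y
      = real (card K) * (position_sum n \<phi> y - \<phi> p (x 1))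
        - (\<Sum>k\<in>K. \<phi> k (x k)) + (\<Sum>k\<in>K. \<phi> p (x k)) + (\<Sum>k\<in>K. \<phi> k (x 1))" .
  have card: "real (card K) = real n - 2" unfolding K_def by (rule card_inner_star[OF p])
  have col_x1: "(\<Sum>k\<in>K. \<phi> k (x 1)) = - \<phi> p (x 1)"
  proof -
    have "(\<Sum>k\<in>{2..n}. \<phi> k (x 1)) = 0"
      using col star_vertices_apply[OF x, of 1] p by auto
    then show ?thesis unfolding K_def using p by (simp add: sum.remove)
  qed
  have diag: "(\<Sum>k\<in>K. \<phi> k (x k)) = position_sum n \<phi> x - \<phi> p (x p)"
    unfolding K_def position_sum_def using p by (simp add: sum_diff1)
  have row: "(\<Sum>k\<in>K. \<phi> p (x k)) = (\<Sum>a\<in>{1..n}. \<phi> p a) - \<phi> p (x 1) - \<phi> p (x p)"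
  proof -
    have "(\<Sum>a\<in>{1..n}. \<phi> p a) = (\<Sum>k\<in>{1..n}. \<phi> p (x k))"
      using x unfolding star_vertices_def
      by (intro sum.reindex_bij_betw[symmetric] permutes_imp_bij) auto
    also have "\<dots> = \<phi> p (x 1) + \<phi> p (x p) + (\<Sum>k\<in>K. \<phi> p (x k))"
    proof -
      have "{1..n} = insert 1 (insert p K)" "1 \<notin> insert p K" "p \<notin> K" "finite K"
        using p unfolding K_def by auto
      then show ?thesis by (simp add: add.assoc)
    qed
    finally show ?thesis by simp
  qed
  have y: "position_sum n \<phi> y = position_sum n \<phi> x - \<phi> p (x p) + \<phi> p (x 1)"
    unfolding y_def by (rule position_sum_comp_transpose_first[OF p])
  show ?thesis
    unfolding W_transform_def y_def[symmetric] J card col_x1 diag row y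
    by (simp add: algebra_simps)
qed

lemma star_eigenspace_position_sum:
  assumes g: "star_eigenspace n (real n - 2) g" and n: "n \<ge> 3"
  obtains \<phi> where "\<forall>x\<in>star_vertices n. g x = position_sum n \<phi> x"
proof -
  let ?W = "\<lambda>p. W_transform n (real n - 2) p"
  define \<phi> where "\<phi> = (\<lambda>p a. - ?W p g (\<tau> 1 a) / real n)"
  have col: "\<forall>a\<in>{1..n}. (\<Sum>p\<in>{2..n}. \<phi> p a) = 0"
  proof
    fix a assume "a \<in> {1..n}"
    then have "\<tau> 1 a \<in> star_vertices n"
      unfolding star_vertices_def by (auto intro: permutes_swap_id)
    then have "(\<Sum>p\<in>{2..n}. ?W p g (\<tau> 1 a)) = 0" by (rule sum_W_transform_pivots[OF g])
    then show "(\<Sum>p\<in>{2..n}. \<phi> p a) = 0"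
      unfolding \<phi>_def by (simp add: sum_divide_distrib[symmetric] sum_negf)
  qed
  define b where "b = (\<lambda>x. g x - position_sum n \<phi> x)"
  have b: "star_eigenspace n (real n - 2) b"
    unfolding b_def using n by (intro star_eigenspace_diff g position_sum_eigenspace col) simp
  have "\<forall>x\<in>star_vertices n. ?W p b x = 0" if p: "p \<in> {2..n}" for p
  proof -
    define R where "R = (\<Sum>a\<in>{1..n}. \<phi> p a)"
    have Wb: "?W p b x = - R" if x: "x \<in> star_vertices n" for x
    proof -
      have "?W p b x = ?W p g x - (R - real n * \<phi> p (x 1))"
        unfolding b_def W_transform_diff R_def W_transform_position_sum[OF col p x] ..
      also have "real n * \<phi> p (x 1) = - ?W p g x"
        unfolding \<phi>_def W_transform_depends_on_first[OF g p x, symmetric] using n by simp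
      finally show ?thesis by simp
    qed
    have "(\<Sum>x\<in>star_vertices n. b x) = 0"
      using n by (intro sum_star_eigenspace_zero[OF b]) auto
    then have "(\<Sum>x\<in>star_vertices n. ?W p b x) = 0"
      using sum_W_transform[OF p] by simp
    then have "real (card (star_vertices n)) * R = 0"
      using Wb by simp
    then have "R = 0"
      using finite_star_vertices star_vertices_nonempty by simp
    then show ?thesis using Wb by simp
  qed
  then have "\<forall>x\<in>star_vertices n. \<forall>p\<in>{2..n}. b (x \<circ> \<tau> 1 p) = b x"
    using W_transform_zero_imp_invariant[OF b] by blast
  then have "b x = 0" if "x \<in> star_vertices n" for x
    using star_eigenspace_zero_of_transpose_invariant[OF b _ _ _ that] n by simp
  then show thesis using that[of \<phi>] unfolding b_def by simp
qed

lemma star_walk_0_eq: "star_walk n p 0 q \<Longrightarrow> p = q"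
  by (erule star_walk.cases) auto

lemma star_walk_1_adj:
  assumes "star_walk n p (Suc 0) q"
  shows "star_adj n p q"
  using assms by (cases rule: star_walk.cases) (auto dest: star_walk_0_eq)

lemma comp_transpose_transpose_in_second_nbhd:
  assumes v: "v \<in> star_vertices n" and i: "i \<in> {2..n}" and j: "j \<in> {2..n}" and ij: "i \<noteq> j"
  shows "v \<circ> \<tau> 1 i \<circ> \<tau> 1 j \<in> second_nbhd n v"
proof -
  define x where "x = v \<circ> \<tau> 1 i \<circ> \<tau> 1 j"
  have vi: "v \<circ> \<tau> 1 i \<in> star_vertices n" using i by (intro star_vertices_comp_transpose[OF v]) auto
  have x: "x \<in> star_vertices n" unfolding x_def using j by (intro star_vertices_comp_transpose[OF vi]) auto
  have "star_walk n v (Suc 0) (v \<circ> \<tau> 1 i)"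
    using v vi i by (intro star_walk.intros(2)[OF star_walk.intros(1)]) (auto simp: star_adj_def)
  then have walk2: "star_walk n v 2 x"
    unfolding numeral_2_eq_2
    by (rule star_walk.intros(2)) (use vi x j in \<open>auto simp: star_adj_def x_def\<close>)
  have x1: "x 1 = v j" and xj: "x j = v i" unfolding x_def using i j ij by auto
  have not0: "\<not> star_walk n v 0 x"
  proof
    assume "star_walk n v 0 x"
    then have "v = x" by (rule star_walk_0_eq)
    then have "v 1 = v j" using x1 by simp
    then show False using star_vertices_inj[OF v, of 1 j] j by simp
  qed
  have not1: "\<not> star_walk n v (Suc 0) x"
  proof
    assume "star_walk n v (Suc 0) x"
    then obtain k where k: "k \<in> {2..n}" and xk: "x = v \<circ> \<tau> 1 k"
      using star_walk_1_adj unfolding star_adj_def by blast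
    have "j = k" using x1 xk star_vertices_inj[OF v] by simp
    then have "i = 1" using xj xk star_vertices_inj[OF v] by simp
    then show False using i by simp
  qed
  have "star_dist n v x = 2"
    unfolding star_dist_def
  proof (rule Least_equality)
    show "star_walk n v 2 x" by (rule walk2)
    fix m assume "star_walk n v m x"
    with not0 not1 show "2 \<le> m" by (cases m; cases "m - 1") auto
  qed
  then show ?thesis unfolding second_nbhd_def x_def[symmetric] using x by simp
qed

lemma star_eigenspace_zero_on_ball1:
  assumes h: "star_eigenspace n (real n - 2) h" and n: "n \<ge> 3" and v: "v \<in> star_vertices n"
    and h2: "\<And>i j. i \<in> {2..n} \<Longrightarrow> j \<in> {2..n} \<Longrightarrow> i \<noteq> j \<Longrightarrow> h (v \<circ> \<tau> 1 i \<circ> \<tau> 1 j) = 0"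
  shows "h v = 0" and "\<And>i. i \<in> {2..n} \<Longrightarrow> h (v \<circ> \<tau> 1 i) = 0"
proof -
  have h1: "(real n - 2) * h (v \<circ> \<tau> 1 i) = h v" if i: "i \<in> {2..n}" for i
  proof -
    have "(real n - 2) * h (v \<circ> \<tau> 1 i) = adj_op n h (v \<circ> \<tau> 1 i)"
      using h star_vertices_comp_transpose[OF v, of 1 i] i unfolding star_eigenspace_def by auto
    also have "\<dots> = h v + (\<Sum>k\<in>{2..n}-{i}. h (v \<circ> \<tau> 1 i \<circ> \<tau> 1 k))"
      unfolding transp_sum_def using i by (simp add: sum.remove comp_assoc)
    also have "(\<Sum>k\<in>{2..n}-{i}. h (v \<circ> \<tau> 1 i \<circ> \<tau> 1 k)) = 0"
      using h2 i by (intro sum.neutral) auto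
    finally show ?thesis by (simp only: add_0_right)
  qed
  have "(real n - 2) * ((real n - 2) * h v) = (real n - 2) * adj_op n h v"
    using h v unfolding star_eigenspace_def by simp
  also have "\<dots> = (\<Sum>i\<in>{2..n}. (real n - 2) * h (v \<circ> \<tau> 1 i))"
    unfolding transp_sum_def by (rule sum_distrib_left)
  also have "\<dots> = (real n - 1) * h v"
    using h1 n by (simp add: of_nat_diff)
  finally have "((real n - 2) * (real n - 2) - (real n - 1)) * h v = 0"
    by (simp add: algebra_simps)
  moreover have "(real n - 2) * (real n - 2) \<noteq> real n - 1"
  proof (cases "n = 3")
    case False
    with n have "(real n - 4) * (real n - 1) \<ge> 0" by simp
    then show ?thesis by (simp add: algebra_simps)
  qed simp
  ultimately show hv: "h v = 0" by simp
  show "h (v \<circ> \<tau> 1 i) = 0" if "i \<in> {2..n}" for i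
    using h1[OF that] hv n by simp
qed

lemma position_sum_zero_of_zero_on_ball2:
  assumes v: "v \<in> star_vertices n"
    and z0: "position_sum n \<phi> v = 0"
    and z1: "\<And>i. i \<in> {2..n} \<Longrightarrow> position_sum n \<phi> (v \<circ> \<tau> 1 i) = 0"
    and z2: "\<And>i j. i \<in> {2..n} \<Longrightarrow> j \<in> {2..n} \<Longrightarrow> i \<noteq> j \<Longrightarrow>
               position_sum n \<phi> (v \<circ> \<tau> 1 i \<circ> \<tau> 1 j) = 0"
    and x: "x \<in> star_vertices n"
  shows "position_sum n \<phi> x = 0"
proof -
  have const: "\<phi> j (v m) = \<phi> j (v j)" if j: "j \<in> {2..n}" and m: "m \<in> {1..n}" for j m
  proof -
    consider "m = 1" | "m = j" | "m \<in> {2..n}" "m \<noteq> j" using m by force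
    then show ?thesis
    proof cases
      case 1
      then show ?thesis
        using position_sum_comp_transpose_first[OF j, of \<phi> v] z0 z1[OF j] by simp
    next
      case 3
      have "(v \<circ> \<tau> 1 m) j = v j" "(v \<circ> \<tau> 1 m) 1 = v m" using 3 j by auto
      then show ?thesis
        using position_sum_comp_transpose_first[OF j, of \<phi> "v \<circ> \<tau> 1 m"] z1[OF 3(1)] z2[OF 3(1) j 3(2)] by simp
    qed simp
  qed
  have "position_sum n \<phi> x = position_sum n \<phi> v"
    unfolding position_sum_def
  proof (rule sum.cong[OF refl])
    fix p assume p: "p \<in> {2..n}"
    have vp: "v permutes {1..n}" using v unfolding star_vertices_def by simp
    have "x p \<in> {1..n}" using star_vertices_apply[OF x, of p] p by auto
    then have "inv v (x p) \<in> {1..n}" and "v (inv v (x p)) = x p"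
      using permutes_in_image[OF permutes_inv[OF vp]] permutes_inverses(1)[OF vp] by auto
    then show "\<phi> p (x p) = \<phi> p (v p)" using const[OF p] by metis
  qed
  with z0 show ?thesis by simp
qed

lemma star_eigenspace_zero_of_zero_two_steps:
  assumes h: "star_eigenspace n (real n - 2) h" and n: "n \<ge> 3" and v: "v \<in> star_vertices n"
    and h2: "\<And>i j. i \<in> {2..n} \<Longrightarrow> j \<in> {2..n} \<Longrightarrow> i \<noteq> j \<Longrightarrow> h (v \<circ> \<tau> 1 i \<circ> \<tau> 1 j) = 0"
    and x: "x \<in> star_vertices n"
  shows "h x = 0"
proof -
  obtain \<phi> where \<phi>: "\<forall>x\<in>star_vertices n. h x = position_sum n \<phi> x"
    using star_eigenspace_position_sum[OF h n] by blast
  have vi: "v \<circ> \<tau> 1 i \<in> star_vertices n" if "i \<in> {2..n}" for i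
    using that by (intro star_vertices_comp_transpose[OF v]) auto
  have vij: "v \<circ> \<tau> 1 i \<circ> \<tau> 1 j \<in> star_vertices n" if "i \<in> {2..n}" "j \<in> {2..n}" for i j
    using that by (intro star_vertices_comp_transpose[OF vi]) auto
  have "position_sum n \<phi> x = 0"
  proof (rule position_sum_zero_of_zero_on_ball2[OF v _ _ _ x])
    show "position_sum n \<phi> v = 0"
      using \<phi> v star_eigenspace_zero_on_ball1(1)[OF h n v h2] by simp
    show "position_sum n \<phi> (v \<circ> \<tau> 1 i) = 0" if "i \<in> {2..n}" for i
      using \<phi> vi[OF that] star_eigenspace_zero_on_ball1(2)[OF h n v h2 that] by metis
    show "position_sum n \<phi> (v \<circ> \<tau> 1 i \<circ> \<tau> 1 j) = 0"
      if "i \<in> {2..n}" "j \<in> {2..n}" "i \<noteq> j" for i j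
      using \<phi> vij h2 that by metis
  qed
  with \<phi> x show ?thesis by simp
qed

theorem theorem2:
  fixes n :: nat and f g :: "(nat \<Rightarrow> nat) \<Rightarrow> real" and v :: "nat \<Rightarrow> nat"
  assumes "n \<ge> 3"
    and "star_eigenfunction n f (real n - 2)"
    and "star_eigenfunction n g (real n - 2)"
    and "v \<in> star_vertices n"
    and "\<forall>x\<in>second_nbhd n v. f x = g x"
  shows "\<forall>x\<in>star_vertices n. f x = g x"
proof
  fix x assume x: "x \<in> star_vertices n"
  have "star_eigenspace n (real n - 2) (\<lambda>x. f x - g x)"
    using assms(2,3) by (intro star_eigenspace_diff star_eigenfunction_eigenspace)
  moreover have "f (v \<circ> \<tau> 1 i \<circ> \<tau> 1 j) - g (v \<circ> \<tau> 1 i \<circ> \<tau> 1 j) = 0"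
    if "i \<in> {2..n}" "j \<in> {2..n}" "i \<noteq> j" for i j
    using assms(5) comp_transpose_transpose_in_second_nbhd[OF assms(4) that] by simp
  ultimately have "f x - g x = 0"
    using star_eigenspace_zero_of_zero_two_steps[OF _ assms(1,4) _ x] by blast
  then show "f x = g x" by simp
qed

end
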